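(* In the setting below, for $\ell\ge1$ define $q_\ell:D_\ell(G^* )\otimes\bigwedge^{n+\ell}F\to\bigwedge^\ell U$ by $$g_1^{*(\alpha_1)}\cdots g_n^{*(\alpha_n)}\otimes f_{\tau_1}\wedge\cdots\wedge f_{\tau_\ell}\wedge f_\sigma\ \mapsto\ \sum_{L\in\mathcal L_{\alpha,\tau}}e_{L_1}\wedge\cdots\wedge e_{L_\ell}$$ for every $\tau=(\tau_1<\cdots<\tau_\ell)$ with $\tau\cap\sigma=\varnothing$ and $|\alpha|=\ell$, and sending every basis element $g^{*(\alpha)}\otimes f_\rho$ with $\rho\not\supseteq\sigma$ to $0$. Then for every $\ell\ge2$, $m_\ell\circ q_\ell=q_{\ell-1}\circ\partial_{\ell+1}$, where $\partial_{\ell+1}:D_\ell(G^* )\otimes\bigwedge^{n+\ell}F\to D_{\ell-1}(G^* )\otimes\bigwedge^{n+\ell-1}F$ is the Eagon–Northcott differential and $m_\ell:\bigwedge^\ell U\to\bigwedge^{\ell-1}U$ is the Koszul differential.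
   Context: Setting: $R=k[x_{ij}\mid1\le i\le n,1\le j\le m]$ over a field $k$, $n\le m$, $M=(x_{ij})$ generic, viewed as $F\to G$ with bases $f_1,\dots,f_m$ of $F$, $g_1,\dots,g_n$ of $G$, dual basis $g_i^*$ of $G^*$. $D_\ell(G^* )$ is the $\ell$th divided power, with basis $g^{*(\alpha)}=g_1^{*(\alpha_1)}\cdots g_n^{*(\alpha_n)}$, $|\alpha|=\ell$. For $\rho=(\rho_1<\dots<\rho_p)$, $f_\rho=f_{\rho_1}\wedge\cdots\wedge f_{\rho_p}$. Fix $\sigma=(\sigma_1<\dots<\sigma_n)$. The Eagon–Northcott complex $E_\bullet$ has $E_0=R$, $E_1=\bigwedge^nF$, $E_{\ell+1}=D_\ell(G^* )\otimes\bigwedge^{n+\ell}F$; $\partial_1(f_\rho)=\det$ of the columns $\rho$ of $M$, and for $\ell\ge1$, $\partial_{\ell+1}(g^{*(\alpha)}\otimes f_{\rho_1}\wedge\cdots\wedge f_{\rho_p})=\sum_{i:\alpha_i>0}\sum_{s=1}^p(-1)^{s+1}x_{i\rho_s}\,g^{*(\alpha-\varepsilon_i)}\otimes f_{\rho_1}\wedge\cdots\widehat{f_{\rho_s}}\cdots\wedge f_{\rho_p}$ (with $D_0(G^* )=R$). $U$ is free with basis $e_{ij}$, $1\le i\le n$, $j\notin\sigma$; for a pair $L=(i,j)$, $e_L=e_{ij}$; $m_\ell(e_{L_1}\wedge\cdots\wedge e_{L_\ell})=\sum_s(-1)^{s+1}x_{L_s}e_{L_1}\wedge\cdots\widehat{e_{L_s}}\cdots\wedge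 e_{L_\ell}$ where $x_{(i,j)}=x_{ij}$. For $\tau=(\tau_1<\dots<\tau_\ell)$ and $\alpha\in\mathbb Z^n_{\ge0}$, $\mathcal L_{\alpha,\tau}$ is the set of sets $\{(r_1,\tau_1),\dots,(r_\ell,\tau_\ell)\}$ with $r_s\in\{i:\alpha_i\ne0\}$ and $|\{s: r_s=j\}|=\alpha_j$ for all $j$; its elements are written $L=(L_1,\dots,L_\ell)$ with $L_s=(r_s,\tau_s)$ ordered by $\tau$. *)

theory Defs
  imports Main
begin

text \<open>Free modules are represented by coefficient functions on a basis index set.
  Rows are indexed by 1..n, columns by 1..m.  A wedge f_rho (rho increasing) is
  represented by the finite set rho; a divided power monomial g^{*(alpha)} by the
  exponent function alpha (supported in 1..n).\<close>

definition lin :: "('b \<Rightarrow> 'c \<Rightarrow> 'a::comm_ring_1) \<Rightarrow> ('b \<Rightarrow> 'a) \<Rightarrow> 'c \<Rightarrow> 'a" where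
  "lin f v = (\<lambda>c. \<Sum>b\<in>{b. v b \<noteq> 0}. v b * f b c)"

definition EN_basis :: "nat \<Rightarrow> nat \<Rightarrow> nat \<Rightarrow> ((nat \<Rightarrow> nat) \<times> nat set) set" where
  "EN_basis n m l = {(\<alpha>, \<rho>). (\<forall>i. \<alpha> i \<noteq> 0 \<longrightarrow> i \<in> {1..n}) \<and> (\<Sum>i\<in>{1..n}. \<alpha> i) = l
                      \<and> \<rho> \<subseteq> {1..m} \<and> card \<rho> = n + l}"

text \<open>Eagon-Northcott differential on a basis element g^{*(alpha)} tensor f_rho
  (for |alpha| >= 1); removing the s-th element c of rho gives sign (-1)^(s+1),
  where s - 1 = card of elements of rho below c.\<close>
definition en_diff :: "nat \<Rightarrow> (nat \<Rightarrow> nat \<Rightarrow> 'a::comm_ring_1)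
      \<Rightarrow> (nat \<Rightarrow> nat) \<times> nat set \<Rightarrow> (nat \<Rightarrow> nat) \<times> nat set \<Rightarrow> 'a" where
  "en_diff n x b b' = (case b of (\<alpha>, \<rho>) \<Rightarrow> case b' of (\<beta>, \<rho>') \<Rightarrow>
     (\<Sum>i\<in>{1..n}. \<Sum>c\<in>\<rho>.
        if 0 < \<alpha> i \<and> \<beta> = \<alpha>(i := \<alpha> i - 1) \<and> \<rho>' = \<rho> - {c}
        then (-1) ^ card {r\<in>\<rho>. r < c} * x i c else 0))"

text \<open>A basis element e_{L_1} wedge ... wedge e_{L_l} of wedge^l U is represented by the
  set {L_1,...,L_l} with L_1 < ... < L_l in this order; for pairs with distinct
  columns this is the ordering by columns used in the paper.\<close>
definition pair_less :: "nat \<times> nat \<Rightarrow> nat \<times> nat \<Rightarrow> bool" where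
  "pair_less L L' = (snd L < snd L' \<or> (snd L = snd L' \<and> fst L < fst L'))"

definition koszul :: "(nat \<Rightarrow> nat \<Rightarrow> 'a::comm_ring_1)
      \<Rightarrow> (nat \<times> nat) set \<Rightarrow> (nat \<times> nat) set \<Rightarrow> 'a" where
  "koszul x E E' = (\<Sum>L\<in>E. if E' = E - {L}
        then (-1) ^ card {L'\<in>E. pair_less L' L} * x (fst L) (snd L) else 0)"

definition Lset :: "(nat \<Rightarrow> nat) \<Rightarrow> nat set \<Rightarrow> (nat \<times> nat) set set" where
  "Lset \<alpha> \<tau> = {E. \<exists>r. (\<forall>t\<in>\<tau>. \<alpha> (r t) \<noteq> 0) \<and> (\<forall>j. card {t\<in>\<tau>. r t = j} = \<alpha> j)
                     \<and> E = (\<lambda>t. (r t, t)) ` \<tau>}"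

text \<open>If sigma is contained
  in rho, write tau = rho - sigma; then f_tau wedge f_sigma = sgn * f_rho with
  sgn = (-1)^(number of pairs t in tau, s in sigma with s < t), so
  q(g^{*(alpha)} tensor f_rho) = sgn * sum over L in \<L>_{alpha,tau}.\<close>
definition qmap :: "nat set \<Rightarrow> (nat \<Rightarrow> nat) \<times> nat set \<Rightarrow> (nat \<times> nat) set \<Rightarrow> 'a::comm_ring_1" where
  "qmap \<sigma> b E = (case b of (\<alpha>, \<rho>) \<Rightarrow>
     if \<sigma> \<subseteq> \<rho> \<and> E \<in> Lset \<alpha> (\<rho> - \<sigma>)
     then (-1) ^ card {(t, s). t \<in> \<rho> - \<sigma> \<and> s \<in> \<sigma> \<and> s < t} else 0)"

end

theory Submission
  imports Defs
begin

text \<open>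
  Both sides are linear, so it suffices to compare them on a basis element
  \<open>g\<^sup>*\<^sup>(\<^sup>\<alpha>\<^sup>) \<otimes> f\<^sub>\<rho>\<close>; if \<open>\<sigma> \<not>\<subseteq> \<rho>\<close> both vanish, so let \<open>\<tau> = \<rho> - \<sigma>\<close>.
  The Koszul differential deletes a pair \<open>(i, c)\<close> from some \<open>L \<in> \<L>\<^sub>\<alpha>\<^sub>,\<^sub>\<tau>\<close>, and the
  sets in \<open>\<L>\<^sub>\<alpha>\<^sub>,\<^sub>\<tau>\<close> containing \<open>(i, c)\<close> are exactly the sets \<open>insert (i, c) L'\<close> with
  \<open>L' \<in> \<L>\<^sub>\<alpha>\<^sub>-\<^sub>\<epsilon>\<^sub>i\<^sub>,\<^sub>\<tau>\<^sub>-\<^sub>c\<close>; as \<open>L\<close> is ordered by columns, the sign is \<open>(-1)\<close> to the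
  number of \<open>t \<in> \<tau>\<close> below \<open>c\<close>. The Eagon--Northcott differential deletes \<open>c\<close> from \<open>\<rho>\<close>
  with sign \<open>(-1)\<close> to the number of \<open>r \<in> \<rho>\<close> below \<open>c\<close>, and only the terms with \<open>c \<in> \<tau>\<close>
  survive \<open>q\<close>. The two signs agree after accounting for the reordering signs of
  \<open>f\<^sub>\<tau> \<and> f\<^sub>\<sigma>\<close> and \<open>f\<^sub>\<tau>\<^sub>-\<^sub>c \<and> f\<^sub>\<sigma>\<close>, which differ by the number of \<open>s \<in> \<sigma>\<close> below \<open>c\<close>.
\<close>

lemma lin_eq_sum:
  assumes "finite S" and "{b. v b \<noteq> 0} \<subseteq> S"
  shows "lin f v c = (\<Sum>b\<in>S. v b * f b c)"
  unfolding lin_def by (rule sum.mono_neutral_left) (use assms in auto)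

lemma lin_cong:
  assumes "\<And>b. v b \<noteq> 0 \<Longrightarrow> f b = g b"
  shows "lin f v = lin g v"
  unfolding lin_def using assms by (intro ext sum.cong) auto

lemma lin_lin:
  assumes fin: "finite {b. v b \<noteq> 0}" and fin_f: "\<And>b. v b \<noteq> 0 \<Longrightarrow> finite {c. f b c \<noteq> 0}"
  shows "lin g (lin f v) = lin (\<lambda>b. lin g (f b)) v"
proof
  fix d
  define B where "B = {b. v b \<noteq> 0}"
  define C where "C = (\<Union>b\<in>B. {c. f b c \<noteq> 0})"
  have "finite C" unfolding C_def B_def using fin fin_f by auto
  have lin_f: "lin f v c = (\<Sum>b\<in>B. v b * f b c)" for c
    unfolding lin_def B_def ..
  have "{c. lin f v c \<noteq> 0} \<subseteq> C"
  proof
    fix c assume "c \<in> {c. lin f v c \<noteq> 0}"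
    then obtain b where "b \<in> B" "v b * f b c \<noteq> 0"
      unfolding lin_f by (auto elim: sum.not_neutral_contains_not_neutral)
    then have "f b c \<noteq> 0" by (metis mult_zero_right)
    with \<open>b \<in> B\<close> show "c \<in> C" unfolding C_def by blast
  qed
  then have "lin g (lin f v) d = (\<Sum>c\<in>C. lin f v c * g c d)"
    using \<open>finite C\<close> by (rule lin_eq_sum[rotated])
  also have "\<dots> = (\<Sum>b\<in>B. v b * (\<Sum>c\<in>C. f b c * g c d))"
    unfolding lin_f sum_distrib_right sum_distrib_left
    by (subst sum.swap) (simp add: mult.assoc)
  also have "\<dots> = (\<Sum>b\<in>B. v b * lin g (f b) d)"
    by (intro sum.cong refl arg_cong[where f = "(*) _"] lin_eq_sum[symmetric] \<open>finite C\<close>)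
       (auto simp: C_def)
  also have "\<dots> = lin (\<lambda>b. lin g (f b)) v d"
    unfolding lin_def B_def ..
  finally show "lin g (lin f v) d = lin (\<lambda>b. lin g (f b)) v d" .
qed

lemma lin_sum_delta:
  fixes a :: "'i \<Rightarrow> 'j \<Rightarrow> 'a::comm_ring_1"
  assumes "finite I" and "finite J"
  shows "lin g (\<lambda>b. \<Sum>i\<in>I. \<Sum>j\<in>J. if b = \<beta> i j then a i j else 0) d
       = (\<Sum>i\<in>I. \<Sum>j\<in>J. a i j * g (\<beta> i j) d)"
proof -
  define S where "S = case_prod \<beta> ` (I \<times> J)"
  have "finite S" unfolding S_def using assms by simp
  have "{b. (\<Sum>i\<in>I. \<Sum>j\<in>J. if b = \<beta> i j then a i j else 0) \<noteq> 0} \<subseteq> S"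
    unfolding S_def by (force elim!: sum.not_neutral_contains_not_neutral split: if_splits)
  then have "lin g (\<lambda>b. \<Sum>i\<in>I. \<Sum>j\<in>J. if b = \<beta> i j then a i j else 0) d
      = (\<Sum>b\<in>S. (\<Sum>i\<in>I. \<Sum>j\<in>J. if b = \<beta> i j then a i j else 0) * g b d)"
    using \<open>finite S\<close> by (rule lin_eq_sum[rotated])
  also have "\<dots> = (\<Sum>i\<in>I. \<Sum>j\<in>J. \<Sum>b\<in>S. if \<beta> i j = b then a i j * g b d else 0)"
    unfolding sum_distrib_right
    by (subst sum.swap, rule sum.cong[OF refl], subst sum.swap) (auto intro!: sum.cong)
  also have "\<dots> = (\<Sum>i\<in>I. \<Sum>j\<in>J. a i j * g (\<beta> i j) d)"
    using \<open>finite S\<close> by (auto simp: S_def intro!: sum.cong)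
  finally show ?thesis .
qed

lemma Lset_iff:
  assumes "finite \<tau>"
  shows "E \<in> Lset \<alpha> \<tau> \<longleftrightarrow> (\<exists>r. (\<forall>j. card {t\<in>\<tau>. r t = j} = \<alpha> j) \<and> E = (\<lambda>t. (r t, t)) ` \<tau>)"
proof
  assume "E \<in> Lset \<alpha> \<tau>"
  then show "\<exists>r. (\<forall>j. card {t\<in>\<tau>. r t = j} = \<alpha> j) \<and> E = (\<lambda>t. (r t, t)) ` \<tau>"
    unfolding Lset_def by blast
next
  assume "\<exists>r. (\<forall>j. card {t\<in>\<tau>. r t = j} = \<alpha> j) \<and> E = (\<lambda>t. (r t, t)) ` \<tau>"
  then obtain r where r: "\<forall>j. card {t\<in>\<tau>. r t = j} = \<alpha> j" "E = (\<lambda>t. (r t, t)) ` \<tau>"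
    by blast
  have "\<alpha> (r t) \<noteq> 0" if "t \<in> \<tau>" for t
  proof -
    have "card {t'\<in>\<tau>. r t' = r t} \<noteq> 0" using that assms by (subst card_0_eq) auto
    then show ?thesis using r(1) by metis
  qed
  then show "E \<in> Lset \<alpha> \<tau>" unfolding Lset_def using r by blast
qed

lemma Lset_subset:
  assumes "\<forall>i. \<alpha> i \<noteq> 0 \<longrightarrow> i \<in> I" and "E \<in> Lset \<alpha> \<tau>"
  shows "E \<subseteq> I \<times> \<tau>"
  using assms unfolding Lset_def by fastforce

lemma finite_Lset:
  assumes "\<forall>i. \<alpha> i \<noteq> 0 \<longrightarrow> i \<in> I" and "finite I" and "finite \<tau>"
  shows "finite (Lset \<alpha> \<tau>)"
proof (rule finite_subset)
  show "Lset \<alpha> \<tau> \<subseteq> Pow (I \<times> \<tau>)" using Lset_subset[OF assms(1)] by blast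
qed (use assms in auto)

lemma insert_in_Lset_pos:
  assumes "insert (i, c) E \<in> Lset \<alpha> \<tau>"
  shows "0 < \<alpha> i"
proof -
  obtain r where r: "\<forall>t\<in>\<tau>. \<alpha> (r t) \<noteq> 0" "insert (i, c) E = (\<lambda>t. (r t, t)) ` \<tau>"
    using assms unfolding Lset_def by blast
  have "(i, c) \<in> (\<lambda>t. (r t, t)) ` \<tau>" using r(2) by blast
  with r(1) show ?thesis by auto
qed

lemma Lset_remove:
  assumes fin: "finite \<tau>" and c: "c \<in> \<tau>" and E: "(i, c) \<notin> E" "insert (i, c) E \<in> Lset \<alpha> \<tau>"
  shows "E \<in> Lset (\<alpha>(i := \<alpha> i - 1)) (\<tau> - {c})"
proof -
  obtain r where r: "\<forall>j. card {t\<in>\<tau>. r t = j} = \<alpha> j" "insert (i, c) E = (\<lambda>t. (r t, t)) ` \<tau>"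
    using E(2) Lset_iff[OF fin] by blast
  have "(i, c) \<in> (\<lambda>t. (r t, t)) ` \<tau>" using r(2) by blast
  then have rc: "r c = i" by auto
  have "E = insert (i, c) E - {(i, c)}" using E(1) by blast
  also have "\<dots> = (\<lambda>t. (r t, t)) ` (\<tau> - {c})" unfolding r(2) using rc by auto
  finally have E_eq: "E = (\<lambda>t. (r t, t)) ` (\<tau> - {c})" .
  have "card {t\<in>\<tau> - {c}. r t = j} = (\<alpha>(i := \<alpha> i - 1)) j" for j
  proof (cases "j = i")
    case True
    then have "{t\<in>\<tau>. r t = j} = insert c {t\<in>\<tau> - {c}. r t = j}" using rc c by auto
    then have "card {t\<in>\<tau>. r t = j} = Suc (card {t\<in>\<tau> - {c}. r t = j})"
      using fin by (simp add: card_insert_if)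
    then show ?thesis using r(1) True by (metis diff_Suc_1 fun_upd_same)
  next
    case False
    then have "{t\<in>\<tau>. r t = j} = {t\<in>\<tau> - {c}. r t = j}" using rc by auto
    then show ?thesis using r(1) False by (metis fun_upd_other)
  qed
  then show "E \<in> Lset (\<alpha>(i := \<alpha> i - 1)) (\<tau> - {c})"
    using Lset_iff[of "\<tau> - {c}"] fin E_eq by blast
qed

lemma Lset_insert:
  assumes fin: "finite \<tau>" and c: "c \<in> \<tau>" and pos: "0 < \<alpha> i"
    and E: "E \<in> Lset (\<alpha>(i := \<alpha> i - 1)) (\<tau> - {c})"
  shows "(i, c) \<notin> E" and "insert (i, c) E \<in> Lset \<alpha> \<tau>"
proof -
  obtain r where r: "\<forall>j. card {t\<in>\<tau> - {c}. r t = j} = (\<alpha>(i := \<alpha> i - 1)) j"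
    "E = (\<lambda>t. (r t, t)) ` (\<tau> - {c})"
    using E Lset_iff[of "\<tau> - {c}"] fin by blast
  define r' where "r' = r(c := i)"
  have img: "insert (i, c) E = (\<lambda>t. (r' t, t)) ` \<tau>"
    using c unfolding r(2) r'_def by auto
  have "card {t\<in>\<tau>. r' t = j} = \<alpha> j" for j
  proof (cases "j = i")
    case True
    then have "{t\<in>\<tau>. r' t = j} = insert c {t\<in>\<tau> - {c}. r t = j}" using c unfolding r'_def by auto
    then have "card {t\<in>\<tau>. r' t = j} = Suc (card {t\<in>\<tau> - {c}. r t = j})"
      using fin by (simp add: card_insert_if)
    then show ?thesis using r(1) True pos by simp
  next
    case False
    then have "{t\<in>\<tau>. r' t = j} = {t\<in>\<tau> - {c}. r t = j}" unfolding r'_def by auto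
    then show ?thesis using r(1) False by simp
  qed
  then show "insert (i, c) E \<in> Lset \<alpha> \<tau>" using Lset_iff[OF fin] img by blast
  show "(i, c) \<notin> E" using r(2) by auto
qed

lemma insert_in_Lset_iff:
  assumes "finite \<tau>" and "c \<in> \<tau>"
  shows "(i, c) \<notin> E \<and> insert (i, c) E \<in> Lset \<alpha> \<tau> \<longleftrightarrow> 0 < \<alpha> i \<and> E \<in> Lset (\<alpha>(i := \<alpha> i - 1)) (\<tau> - {c})"
proof (cases "0 < \<alpha> i")
  case True
  then show ?thesis
    using Lset_remove[of \<tau> c i E \<alpha>, OF assms] Lset_insert[of \<tau> c \<alpha> i E, OF assms True]
    by (intro iffI conjI) auto
next
  case False
  then show ?thesis using insert_in_Lset_pos[of i c E \<alpha> \<tau>] by auto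
qed

lemma card_pair_less_Lset:
  assumes "finite \<tau>" and "E \<in> Lset \<alpha> \<tau>" and "(i, c) \<in> E"
  shows "card {L\<in>E. pair_less L (i, c)} = card {t\<in>\<tau>. t < c}"
proof -
  obtain r where r: "E = (\<lambda>t. (r t, t)) ` \<tau>" using assms(1,2) Lset_iff by blast
  with assms(3) have "r c = i" by auto
  then have "{L\<in>E. pair_less L (i, c)} = (\<lambda>t. (r t, t)) ` {t\<in>\<tau>. t < c}"
    unfolding r by (auto simp: pair_less_def)
  moreover have "inj_on (\<lambda>t. (r t, t)) {t\<in>\<tau>. t < c}" by (auto intro: inj_onI)
  ultimately show ?thesis by (simp add: card_image)
qed

lemma koszul_eq_sum_superset:
  assumes "finite K" and "E \<subseteq> K"
  shows "koszul x E E' = (\<Sum>L\<in>K. if L \<in> E \<and> E' = E - {L}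
           then (-1) ^ card {L'\<in>E. pair_less L' L} * x (fst L) (snd L) else 0)"
proof -
  have "koszul x E E' = (\<Sum>L\<in>K \<inter> E. if E' = E - {L}
           then (-1) ^ card {L'\<in>E. pair_less L' L} * x (fst L) (snd L) else 0)"
    unfolding koszul_def using assms(2) by (simp add: Int_absorb1)
  also have "\<dots> = (\<Sum>L\<in>K. if L \<in> E \<and> E' = E - {L}
           then (-1) ^ card {L'\<in>E. pair_less L' L} * x (fst L) (snd L) else 0)"
    by (subst sum.inter_restrict[OF assms(1)]) (auto intro: sum.cong)
  finally show ?thesis .
qed

lemma sum_koszul_Lset:
  fixes x :: "nat \<Rightarrow> nat \<Rightarrow> 'a::comm_ring_1"
  assumes supp: "\<forall>i. \<alpha> i \<noteq> 0 \<longrightarrow> i \<in> I" and "finite I" and "finite \<tau>"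
  shows "(\<Sum>E\<in>Lset \<alpha> \<tau>. koszul x E E')
       = (\<Sum>i\<in>I. \<Sum>c\<in>\<tau>. if 0 < \<alpha> i \<and> E' \<in> Lset (\<alpha>(i := \<alpha> i - 1)) (\<tau> - {c})
            then (-1) ^ card {t\<in>\<tau>. t < c} * x i c else 0)"
proof -
  define A where "A = Lset \<alpha> \<tau>"
  define K where "K = I \<times> \<tau>"
  have "finite A" unfolding A_def using finite_Lset assms by blast
  have "finite K" unfolding K_def using assms by simp
  have "(\<Sum>E\<in>A. koszul x E E') = (\<Sum>E\<in>A. \<Sum>L\<in>K. if L \<in> E \<and> E' = E - {L}
      then (-1) ^ card {L'\<in>E. pair_less L' L} * x (fst L) (snd L) else 0)"
    using Lset_subset[OF supp] by (intro sum.cong refl koszul_eq_sum_superset \<open>finite K\<close>)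
      (auto simp: A_def K_def)
  also have "\<dots> = (\<Sum>L\<in>K. \<Sum>E\<in>A. if E = insert L E' then
      (if L \<notin> E' then (-1) ^ card {L'\<in>E. pair_less L' L} * x (fst L) (snd L) else 0) else 0)"
  proof -
    have "(if L \<in> E \<and> E' = E - {L} then a else 0) = (if E = insert L E' then (if L \<notin> E' then a else 0) else 0)"
      for L E and a :: 'a
      by auto
    then show ?thesis by (subst sum.swap) (simp only:)
  qed
  also have "\<dots> = (\<Sum>L\<in>K. if L \<notin> E' \<and> insert L E' \<in> A
      then (-1) ^ card {t\<in>\<tau>. t < snd L} * x (fst L) (snd L) else 0)"
  proof (intro sum.cong refl)
    fix L :: "nat \<times> nat"
    have "insert L E' \<in> A \<Longrightarrow> card {L'\<in>insert L E'. pair_less L' L} = card {t\<in>\<tau>. t < snd L}"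
      using card_pair_less_Lset[OF \<open>finite \<tau>\<close>, of "insert L E'" \<alpha> "fst L" "snd L"] by (simp add: A_def)
    then show "(\<Sum>E\<in>A. if E = insert L E' then (if L \<notin> E'
        then (-1) ^ card {L'\<in>E. pair_less L' L} * x (fst L) (snd L) else 0) else 0)
      = (if L \<notin> E' \<and> insert L E' \<in> A then (-1) ^ card {t\<in>\<tau>. t < snd L} * x (fst L) (snd L) else 0)"
      using \<open>finite A\<close> by simp
  qed
  also have "\<dots> = (\<Sum>i\<in>I. \<Sum>c\<in>\<tau>. if 0 < \<alpha> i \<and> E' \<in> Lset (\<alpha>(i := \<alpha> i - 1)) (\<tau> - {c})
      then (-1) ^ card {t\<in>\<tau>. t < c} * x i c else 0)"
    unfolding K_def A_def sum.cartesian_product'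
    by (intro sum.cong refl) (simp only: fst_conv snd_conv insert_in_Lset_iff[OF \<open>finite \<tau>\<close>])
  finally show ?thesis unfolding A_def .
qed

definition inversions :: "nat set \<Rightarrow> nat set \<Rightarrow> nat" where
  "inversions \<tau> \<sigma> = card {(t, s). t \<in> \<tau> \<and> s \<in> \<sigma> \<and> s < t}"

lemma qmap_eq:
  "qmap \<sigma> (\<alpha>, \<rho>) E = (if \<sigma> \<subseteq> \<rho> \<and> E \<in> Lset \<alpha> (\<rho> - \<sigma>) then (-1) ^ inversions (\<rho> - \<sigma>) \<sigma> else 0)"
  by (simp add: qmap_def inversions_def)

lemma inversions_remove:
  assumes "finite \<tau>" and "finite \<sigma>" and "c \<in> \<tau>"
  shows "inversions \<tau> \<sigma> = inversions (\<tau> - {c}) \<sigma> + card {s\<in>\<sigma>. s < c}"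
proof -
  have split: "{(t, s). t \<in> \<tau> \<and> s \<in> \<sigma> \<and> s < t}
      = {(t, s). t \<in> \<tau> - {c} \<and> s \<in> \<sigma> \<and> s < t} \<union> Pair c ` {s\<in>\<sigma>. s < c}"
    using assms(3) by auto
  have "finite {(t, s). t \<in> \<tau> - {c} \<and> s \<in> \<sigma> \<and> s < t}"
    by (rule finite_subset[of _ "\<tau> \<times> \<sigma>"]) (use assms in auto)
  then show ?thesis unfolding inversions_def split
    using assms(2) by (subst card_Un_disjoint) (auto simp: card_image inj_on_def)
qed

lemma card_less_split:
  assumes "finite \<rho>" and "\<sigma> \<subseteq> \<rho>"
  shows "card {r\<in>\<rho>. r < c} = card {t\<in>\<rho> - \<sigma>. t < c} + card {s\<in>\<sigma>. s < c}"
proof -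
  have split: "{r\<in>\<rho>. r < c} = {t\<in>\<rho> - \<sigma>. t < c} \<union> {s\<in>\<sigma>. s < c}" using assms by auto
  have "finite \<sigma>" using assms finite_subset by auto
  then show ?thesis unfolding split using assms by (subst card_Un_disjoint) auto
qed

lemma inversions_add_card_less:
  assumes "finite \<rho>" and "\<sigma> \<subseteq> \<rho>" and "c \<in> \<rho> - \<sigma>"
  shows "inversions (\<rho> - \<sigma>) \<sigma> + card {t\<in>\<rho> - \<sigma>. t < c} = card {r\<in>\<rho>. r < c} + inversions (\<rho> - \<sigma> - {c}) \<sigma>"
proof -
  have "finite \<sigma>" using assms(1,2) finite_subset by blast
  then show ?thesis
    using inversions_remove[of "\<rho> - \<sigma>" \<sigma> c] card_less_split[of \<rho> \<sigma> c] assms by simp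
qed

lemma en_diff_eq_sum_delta:
  "en_diff n x (\<alpha>, \<rho>) = (\<lambda>b. \<Sum>i\<in>{1..n}. \<Sum>c\<in>\<rho>. if b = (\<alpha>(i := \<alpha> i - 1), \<rho> - {c})
      then (if 0 < \<alpha> i then (-1) ^ card {r\<in>\<rho>. r < c} * x i c else 0) else 0)"
  by (auto simp: en_diff_def intro!: ext sum.cong split: prod.split)

lemma finite_en_diff_support:
  assumes "finite \<rho>"
  shows "finite {b. en_diff n x (\<alpha>, \<rho>) b \<noteq> 0}"
proof (rule finite_subset)
  show "{b. en_diff n x (\<alpha>, \<rho>) b \<noteq> 0} \<subseteq> (\<lambda>(i, c). (\<alpha>(i := \<alpha> i - 1), \<rho> - {c})) ` ({1..n} \<times> \<rho>)"
    unfolding en_diff_eq_sum_delta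
    by (force elim!: sum.not_neutral_contains_not_neutral split: if_splits)
qed (use assms in simp)

lemma finite_qmap_support:
  assumes "\<forall>i. \<alpha> i \<noteq> 0 \<longrightarrow> i \<in> I" and "finite I" and "finite \<rho>"
  shows "finite {E. qmap \<sigma> (\<alpha>, \<rho>) E \<noteq> 0}"
proof (rule finite_subset)
  show "{E. qmap \<sigma> (\<alpha>, \<rho>) E \<noteq> 0} \<subseteq> Lset \<alpha> (\<rho> - \<sigma>)"
    by (auto simp: qmap_eq split: if_splits)
qed (use assms finite_Lset in blast)

lemma lin_en_diff:
  assumes "finite \<rho>"
  shows "lin g (en_diff n x (\<alpha>, \<rho>)) d = (\<Sum>i\<in>{1..n}. \<Sum>c\<in>\<rho>.
      (if 0 < \<alpha> i then (-1) ^ card {r\<in>\<rho>. r < c} * x i c else 0) * g (\<alpha>(i := \<alpha> i - 1), \<rho> - {c}) d)"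
  unfolding en_diff_eq_sum_delta using assms by (simp only: lin_sum_delta finite_atLeastAtMost)

lemma lin_koszul_qmap:
  fixes x :: "nat \<Rightarrow> nat \<Rightarrow> 'a::comm_ring_1"
  assumes supp: "\<forall>i. \<alpha> i \<noteq> 0 \<longrightarrow> i \<in> {1..n}" and "finite \<rho>" and "\<sigma> \<subseteq> \<rho>"
  shows "lin (koszul x) (qmap \<sigma> (\<alpha>, \<rho>)) E'
       = (\<Sum>i\<in>{1..n}. \<Sum>c\<in>\<rho> - \<sigma>. if 0 < \<alpha> i \<and> E' \<in> Lset (\<alpha>(i := \<alpha> i - 1)) (\<rho> - \<sigma> - {c})
            then (-1) ^ (inversions (\<rho> - \<sigma>) \<sigma> + card {t\<in>\<rho> - \<sigma>. t < c}) * x i c else 0)"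
proof -
  have "finite (\<rho> - \<sigma>)" using \<open>finite \<rho>\<close> by simp
  have "lin (koszul x) (qmap \<sigma> (\<alpha>, \<rho>)) E'
      = (\<Sum>E\<in>Lset \<alpha> (\<rho> - \<sigma>). (-1) ^ inversions (\<rho> - \<sigma>) \<sigma> * koszul x E E')"
    using \<open>\<sigma> \<subseteq> \<rho>\<close> finite_Lset[OF supp _ \<open>finite (\<rho> - \<sigma>)\<close>]
    by (subst lin_eq_sum[of "Lset \<alpha> (\<rho> - \<sigma>)"]) (auto simp: qmap_eq intro: sum.cong)
  also have "\<dots> = (\<Sum>i\<in>{1..n}. \<Sum>c\<in>\<rho> - \<sigma>. if 0 < \<alpha> i \<and> E' \<in> Lset (\<alpha>(i := \<alpha> i - 1)) (\<rho> - \<sigma> - {c})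
            then (-1) ^ (inversions (\<rho> - \<sigma>) \<sigma> + card {t\<in>\<rho> - \<sigma>. t < c}) * x i c else 0)"
    unfolding sum_distrib_left[symmetric] sum_koszul_Lset[OF supp finite_atLeastAtMost \<open>finite (\<rho> - \<sigma>)\<close>]
    by (simp add: sum_distrib_left power_add mult.assoc if_distrib cong: if_cong)
  finally show ?thesis .
qed

lemma lin_qmap_en_diff:
  fixes x :: "nat \<Rightarrow> nat \<Rightarrow> 'a::comm_ring_1"
  assumes "finite \<rho>" and "\<sigma> \<subseteq> \<rho>"
  shows "lin (qmap \<sigma>) (en_diff n x (\<alpha>, \<rho>)) E'
       = (\<Sum>i\<in>{1..n}. \<Sum>c\<in>\<rho> - \<sigma>. if 0 < \<alpha> i \<and> E' \<in> Lset (\<alpha>(i := \<alpha> i - 1)) (\<rho> - \<sigma> - {c})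
            then (-1) ^ (card {r\<in>\<rho>. r < c} + inversions (\<rho> - \<sigma> - {c}) \<sigma>) * x i c else 0)"
proof -
  have outside: "qmap \<sigma> (\<beta>, \<rho> - {c}) E' = 0" if "c \<in> \<sigma>" for \<beta> c
    using that by (auto simp: qmap_eq)
  have inside: "qmap \<sigma> (\<beta>, \<rho> - {c}) E'
      = (if E' \<in> Lset \<beta> (\<rho> - \<sigma> - {c}) then (-1) ^ inversions (\<rho> - \<sigma> - {c}) \<sigma> else 0)"
    if "c \<in> \<rho> - \<sigma>" for \<beta> c
  proof -
    have "\<rho> - {c} - \<sigma> = \<rho> - \<sigma> - {c}" by blast
    then show ?thesis using assms(2) that by (auto simp: qmap_eq)
  qed
  have "lin (qmap \<sigma>) (en_diff n x (\<alpha>, \<rho>)) E' = (\<Sum>i\<in>{1..n}. \<Sum>c\<in>\<rho>.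
      (if 0 < \<alpha> i then (-1) ^ card {r\<in>\<rho>. r < c} * x i c else 0) * qmap \<sigma> (\<alpha>(i := \<alpha> i - 1), \<rho> - {c}) E')"
    using \<open>finite \<rho>\<close> by (rule lin_en_diff)
  also have "\<dots> = (\<Sum>i\<in>{1..n}. \<Sum>c\<in>\<rho> - \<sigma>. if 0 < \<alpha> i \<and> E' \<in> Lset (\<alpha>(i := \<alpha> i - 1)) (\<rho> - \<sigma> - {c})
            then (-1) ^ (card {r\<in>\<rho>. r < c} + inversions (\<rho> - \<sigma> - {c}) \<sigma>) * x i c else 0)"
    by (intro sum.cong[OF refl] sum.mono_neutral_cong_right[OF \<open>finite \<rho>\<close> Diff_subset])
      (auto simp: outside inside power_add ac_simps)
  finally show ?thesis .
qed

lemma lin_koszul_qmap_eq_lin_qmap_en_diff: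
  fixes x :: "nat \<Rightarrow> nat \<Rightarrow> 'a::comm_ring_1"
  assumes supp: "\<forall>i. \<alpha> i \<noteq> 0 \<longrightarrow> i \<in> {1..n}" and "finite \<rho>"
  shows "lin (koszul x) (qmap \<sigma> (\<alpha>, \<rho>)) = lin (qmap \<sigma>) (en_diff n x (\<alpha>, \<rho>))"
proof
  fix E'
  show "lin (koszul x) (qmap \<sigma> (\<alpha>, \<rho>)) E' = lin (qmap \<sigma>) (en_diff n x (\<alpha>, \<rho>)) E'"
  proof (cases "\<sigma> \<subseteq> \<rho>")
    case True
    show ?thesis
      unfolding lin_koszul_qmap[OF supp \<open>finite \<rho>\<close> True] lin_qmap_en_diff[OF \<open>finite \<rho>\<close> True]
      by (intro sum.cong refl) (simp only: inversions_add_card_less[OF \<open>finite \<rho>\<close> True])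
  next
    case False
    then have qmap_zero: "qmap \<sigma> (\<beta>, \<rho>') E = 0" if "\<rho>' \<subseteq> \<rho>" for \<beta> \<rho>' E
      using that by (auto simp: qmap_eq)
    have "lin (koszul x) (qmap \<sigma> (\<alpha>, \<rho>)) E' = 0" by (simp add: lin_def qmap_zero)
    moreover have "lin (qmap \<sigma>) (en_diff n x (\<alpha>, \<rho>)) E' = 0"
      using \<open>finite \<rho>\<close> by (simp add: lin_en_diff qmap_zero)
    ultimately show ?thesis by simp
  qed
qed

text \<open>Only the support condition on \<open>\<alpha>\<close> and the finiteness of \<open>\<rho>\<close> are used: the identity
  holds on every basis element, whatever \<open>m\<close>, \<open>card \<sigma>\<close> and \<open>l\<close> are.\<close>

theorem lemma4p12:
  fixes x :: "nat \<Rightarrow> nat \<Rightarrow> 'a::comm_ring_1"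
    and n m l :: nat and \<sigma> :: "nat set"
    and v :: "(nat \<Rightarrow> nat) \<times> nat set \<Rightarrow> 'a"
  assumes "n \<le> m" and "\<sigma> \<subseteq> {1..m}" and "card \<sigma> = n" and "2 \<le> l"
    and "{b. v b \<noteq> 0} \<subseteq> EN_basis n m l"
  shows "lin (koszul x) (lin (qmap \<sigma>) v) = lin (qmap \<sigma>) (lin (en_diff n x) v)"
proof (cases "finite {b. v b \<noteq> 0}")
  case False
  then show ?thesis by (simp add: lin_def)
next
  case True
  have basis: "(\<forall>i. \<alpha> i \<noteq> 0 \<longrightarrow> i \<in> {1..n}) \<and> finite \<rho>" if "v (\<alpha>, \<rho>) \<noteq> 0" for \<alpha> \<rho>
    using that assms(5) unfolding EN_basis_def by (auto intro: finite_subset)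
  have "lin (koszul x) (lin (qmap \<sigma>) v) = lin (\<lambda>b. lin (koszul x) (qmap \<sigma> b)) v"
    using True basis finite_qmap_support[where 'a = 'a, of _ "{1..n}"] by (intro lin_lin) auto
  also have "\<dots> = lin (\<lambda>b. lin (qmap \<sigma>) (en_diff n x b)) v"
    using basis lin_koszul_qmap_eq_lin_qmap_en_diff[where x = x] by (intro lin_cong) auto
  also have "\<dots> = lin (qmap \<sigma>) (lin (en_diff n x) v)"
    using True basis finite_en_diff_support[where x = x] by (intro lin_lin[symmetric]) auto
  finally show ?thesis .
qed

end
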